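(* Let $(b_n)$ be real numbers with $0 \le b_n < \ln n$, $b_n = (1 - o(1)) \ln n$, and $\ln n - b_n \to \infty$ as $n \to \infty$. Then there exists a sequence $\varepsilon_n \to 0$ such that for all sufficiently large $n$, \[ \mathbb{P}(F_n^- \le b_n) \le (\ln n)^{d-1} \exp\!\left[-\exp\!\left\{(1+\varepsilon_n)\tfrac12(\ln n - b_n)\right\}\right]. \]
   Context: Fix an integer $d \ge 1$. Let $X^{(1)}, X^{(2)}, \dots$ be i.i.d. random vectors in $\mathbb{R}^d$ with independent Exponential$(1)$ coordinates. For $x,y \in \mathbb{R}^d$ write $x \prec y$ if $x_j<y_j$ for all $j$, $x \le y$ if $x_j \le y_j$ for all $j$, and $x_+ := \sum_j x_j$. The record-setting region at time $n$ is $\mathrm{RS}_n := \{x \in \mathbb{R}^d : 0 \le x,\ x \not\prec X^{(i)} \text{ for all } 1 \le i \le n\}$, and its frontier $F_n$ is the topological boundary of $\mathrm{RS}_n$ relative to $[0,\infty)^d$. Define $F_n^- := \min\{x_+ : x \in F_n\}$. *)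

theory Defs
  imports "HOL-Probability.Probability"
begin

definition strictly_below :: "real ^ 'd \<Rightarrow> real ^ 'd \<Rightarrow> bool" where
  "strictly_below x y \<longleftrightarrow> (\<forall>j. x $ j < y $ j)"

definition orthant :: "(real ^ 'd) set" where
  "orthant = {x. \<forall>j. 0 \<le> x $ j}"

definition RS :: "(nat \<Rightarrow> real ^ 'd) \<Rightarrow> nat \<Rightarrow> (real ^ 'd) set" where
  "RS Xs n = {x \<in> orthant. \<forall>i\<in>{1..n}. \<not> strictly_below x (Xs i)}"

definition frontierRS :: "(nat \<Rightarrow> real ^ 'd) \<Rightarrow> nat \<Rightarrow> (real ^ 'd) set" where
  "frontierRS Xs n = (subtopology euclidean orthant) frontier_of (RS Xs n)"

definition Fminus :: "(nat \<Rightarrow> real ^ 'd) \<Rightarrow> nat \<Rightarrow> real" where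
  "Fminus Xs n = Inf ((\<lambda>x. \<Sum>j\<in>UNIV. x $ j) ` frontierRS Xs n)"

end

theory Submission
  imports Defs
begin

text \<open>
  Since RS_n is closed and upward closed, F_n^- \<le> b yields a point of RS_n with coordinate
  sum below b + h. Rounding it up to a grid of mesh h on the simplex {y \<ge> 0. y_+ = b + d h}
  gives a grid point that still lies in RS_n, and for a fixed y \<ge> 0 independence gives
  P(y \<in> RS_n) = (1 - exp (- y_+))^n. With h = (ln n - b) / (4 d) the grid has O((ln n)^(d-1))
  points, and the union bound (ln n)^(d-1) exp (- n exp (- b - d h)) is eventually below the
  claimed bound, already with \<epsilon>_n = 0.
\<close>

section \<open>The record-setting region\<close>

lemma RS_upward_closed:
  assumes "x \<in> RS Xs n" and "\<And>j. x $ j \<le> y $ j"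
  shows "y \<in> RS Xs n"
proof -
  have "\<not> strictly_below y (Xs k)" if "k \<in> {1..n}" for k
  proof
    assume "strictly_below y (Xs k)"
    then have "strictly_below x (Xs k)"
      using assms(2) unfolding strictly_below_def by (meson le_less_trans)
    then show False using assms(1) that by (auto simp: RS_def)
  qed
  moreover have "y \<in> orthant"
    using assms by (auto simp: RS_def orthant_def intro: order_trans)
  ultimately show ?thesis by (simp add: RS_def)
qed

lemma closedin_RS:
  fixes Xs :: "nat \<Rightarrow> real ^ 'd"
  shows "closedin (subtopology euclidean orthant) (RS Xs n)"
proof -
  have "RS Xs n = orthant \<inter> (\<Inter>k\<in>{1..n}. \<Union>j. {x. Xs k $ j \<le> x $ j})"
    by (auto simp: RS_def strictly_below_def not_less)
  moreover have "closed (\<Inter>k\<in>{1..n}. \<Union>j. {x::real^'d. Xs k $ j \<le> x $ j})"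
    by (intro closed_INT closed_Union ballI closed_Collect_le continuous_intros) auto
  ultimately show ?thesis by (simp add: closedin_closed_Int)
qed

lemma frontierRS_subset_RS: "frontierRS Xs n \<subseteq> RS Xs n"
  unfolding frontierRS_def by (rule frontier_of_subset_closedin[OF closedin_RS])

lemma RS_nonempty:
  fixes Xs :: "nat \<Rightarrow> real ^ 'd"
  shows "(\<chi> j. \<Sum>k\<in>{1..n}. \<bar>Xs k $ j\<bar>) \<in> RS Xs n"
proof -
  have "Xs k $ j \<le> (\<Sum>k\<in>{1..n}. \<bar>Xs k $ j\<bar>)" if "k \<in> {1..n}" for k j
  proof -
    have "\<bar>Xs k $ j\<bar> \<le> (\<Sum>k\<in>{1..n}. \<bar>Xs k $ j\<bar>)"
      using that by (intro member_le_sum) auto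
    then show ?thesis by linarith
  qed
  then show ?thesis
    by (auto simp: RS_def orthant_def strictly_below_def not_less)
qed

lemma frontierRS_nonempty:
  fixes Xs :: "nat \<Rightarrow> real ^ 'd"
  assumes "k \<in> {1..n}" and "strictly_below 0 (Xs k)"
  shows "frontierRS Xs n \<noteq> {}"
proof -
  have "convex (orthant :: (real^'d) set)"
    unfolding orthant_def convex_def by (auto intro!: add_nonneg_nonneg mult_nonneg_nonneg)
  then have "connected_space (subtopology euclidean (orthant :: (real^'d) set))"
    by (intro connected_space_subtopology) (simp add: convex_connected)
  moreover have "RS Xs n \<subseteq> orthant"
    by (auto simp: RS_def)
  moreover have "0 \<in> orthant - RS Xs n"
    using assms by (auto simp: RS_def orthant_def)
  ultimately show ?thesis
    unfolding frontierRS_def using connected_space_frontier_eq_empty RS_nonempty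
    by (metis DiffE empty_iff topspace_euclidean_subtopology)
qed

lemma exists_RS_point_sum_less:
  assumes "k \<in> {1..n}" and "strictly_below 0 (Xs k)" and "Fminus Xs n < c"
  shows "\<exists>x\<in>RS Xs n. (\<Sum>j\<in>UNIV. x $ j) < c"
proof -
  let ?S = "(\<lambda>x. \<Sum>j\<in>UNIV. x $ j) ` frontierRS Xs n"
  have "bdd_below ?S"
    using frontierRS_subset_RS
    by (intro bdd_belowI[of _ 0]) (auto simp: RS_def orthant_def intro!: sum_nonneg)
  then obtain x where "x \<in> frontierRS Xs n" "(\<Sum>j\<in>UNIV. x $ j) < c"
    using assms frontierRS_nonempty[where Xs=Xs, OF assms(1,2)] cInf_less_iff[of ?S c]
    unfolding Fminus_def by auto
  then show ?thesis using frontierRS_subset_RS by auto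
qed

section \<open>Rounding onto a grid\<close>

lemma nat_ceiling_divide_bounds:
  fixes x h :: real
  assumes "0 \<le> x" and "0 < h"
  shows "x \<le> h * real (nat \<lceil>x / h\<rceil>)" and "h * real (nat \<lceil>x / h\<rceil>) < x + h"
proof -
  have "real (nat \<lceil>x / h\<rceil>) = of_int \<lceil>x / h\<rceil>"
    using assms by simp
  moreover have "x / h \<le> of_int \<lceil>x / h\<rceil>" "of_int \<lceil>x / h\<rceil> - 1 < x / h"
    by linarith+
  then have "x \<le> of_int \<lceil>x / h\<rceil> * h" "(of_int \<lceil>x / h\<rceil> - 1) * h < x"
    using pos_divide_le_eq pos_less_divide_eq assms(2) by blast+
  ultimately show "x \<le> h * real (nat \<lceil>x / h\<rceil>)" "h * real (nat \<lceil>x / h\<rceil>) < x + h"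
    by (simp_all add: algebra_simps)
qed

text \<open>The coordinate \<open>j0\<close> absorbs the rounding, so every grid point has coordinate sum \<open>B\<close>.\<close>

definition grid_point :: "'d \<Rightarrow> real \<Rightarrow> real \<Rightarrow> ('d \<Rightarrow> nat) \<Rightarrow> real ^ 'd" where
  "grid_point j0 h B m =
     (\<chi> j. if j = j0 then B - h * (\<Sum>i\<in>UNIV - {j0}. real (m i)) else h * real (m j))"

definition grid_indices :: "'d::finite \<Rightarrow> real \<Rightarrow> real \<Rightarrow> nat \<Rightarrow> ('d \<Rightarrow> nat) set" where
  "grid_indices j0 h B K =
     {m \<in> UNIV - {j0} \<rightarrow>\<^sub>E {0..K}. h * (\<Sum>i\<in>UNIV - {j0}. real (m i)) \<le> B}"

lemma finite_grid_indices: "finite (grid_indices j0 h B K)"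
proof (rule finite_subset)
  show "grid_indices j0 h B K \<subseteq> UNIV - {j0} \<rightarrow>\<^sub>E {0..K}"
    unfolding grid_indices_def by blast
qed (simp add: finite_PiE)

lemma card_grid_indices_le:
  fixes j0 :: "'d::finite"
  shows "card (grid_indices j0 h B K) \<le> (K + 1) ^ (CARD('d) - 1)"
proof -
  have "card (grid_indices j0 h B K) \<le> card (UNIV - {j0} \<rightarrow>\<^sub>E {0..K})"
    unfolding grid_indices_def by (intro card_mono finite_PiE) auto
  also have "\<dots> = (K + 1) ^ (CARD('d) - 1)"
    by (simp add: card_PiE card_Diff_singleton)
  finally show ?thesis .
qed

lemma sum_grid_point: "(\<Sum>j\<in>UNIV. grid_point j0 h B m $ j) = B"
proof -
  have "(\<Sum>j\<in>UNIV. grid_point j0 h B m $ j)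
      = grid_point j0 h B m $ j0 + (\<Sum>j\<in>UNIV - {j0}. h * real (m j))"
    by (subst sum.remove[of UNIV j0]) (auto intro!: sum.cong simp: grid_point_def)
  then show ?thesis by (simp add: grid_point_def sum_distrib_left)
qed

lemma grid_point_in_orthant:
  assumes "m \<in> grid_indices j0 h B K" and "0 \<le> h"
  shows "grid_point j0 h B m \<in> orthant"
  using assms by (auto simp: grid_point_def grid_indices_def orthant_def)

lemma exists_grid_point_above:
  fixes x :: "real ^ 'd"
  assumes h: "0 < h" and x: "x \<in> orthant" and sum_x: "(\<Sum>j\<in>UNIV. x $ j) < b + h"
  defines "B \<equiv> b + real CARD('d) * h"
  shows "\<exists>m\<in>grid_indices j0 h B (nat \<lceil>b / h\<rceil> + 2). \<forall>j. x $ j \<le> grid_point j0 h B m $ j"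
proof -
  define m where "m = restrict (\<lambda>j. nat \<lceil>x $ j / h\<rceil>) (UNIV - {j0})"
  have x_nonneg: "0 \<le> x $ j" for j
    using x by (simp add: orthant_def)
  note round = nat_ceiling_divide_bounds[OF x_nonneg h]
  have "m j \<le> nat \<lceil>b / h\<rceil> + 2" if "j \<noteq> j0" for j
  proof -
    have "x $ j \<le> (\<Sum>j\<in>UNIV. x $ j)"
      using x_nonneg by (intro member_le_sum) auto
    then have "h * real (nat \<lceil>x $ j / h\<rceil>) < h * (b / h + 2)"
      using round(2)[of j] sum_x h by (simp add: algebra_simps)
    then have "real (nat \<lceil>x $ j / h\<rceil>) < b / h + 2"
      using h by simp
    then show ?thesis
      using that unfolding m_def by simp linarith
  qed
  then have "m \<in> UNIV - {j0} \<rightarrow>\<^sub>E {0..nat \<lceil>b / h\<rceil> + 2}"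
    by (auto simp: m_def)
  have "h * (\<Sum>i\<in>UNIV - {j0}. real (m i)) \<le> (\<Sum>i\<in>UNIV - {j0}. x $ i + h)"
    unfolding sum_distrib_left by (intro sum_mono) (simp add: m_def less_imp_le[OF round(2)])
  also have "\<dots> = (\<Sum>j\<in>UNIV. x $ j) - x $ j0 + (real CARD('d) - 1) * h"
    by (simp add: sum.distrib sum_diff card_Diff_singleton of_nat_diff)
  finally have slack: "x $ j0 \<le> B - h * (\<Sum>i\<in>UNIV - {j0}. real (m i))"
    using sum_x unfolding B_def by (simp add: algebra_simps)
  have "m \<in> grid_indices j0 h B (nat \<lceil>b / h\<rceil> + 2)"
    using \<open>m \<in> _\<close> slack x_nonneg[of j0] unfolding grid_indices_def by simp
  moreover have "x $ j \<le> grid_point j0 h B m $ j" for j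
  proof (cases "j = j0")
    case True
    then show ?thesis
      using slack by (simp add: grid_point_def)
  next
    case False
    then show ?thesis
      using round(1)[of j] by (simp add: grid_point_def m_def)
  qed
  ultimately show ?thesis by blast
qed

section \<open>The double-exponential bound\<close>

lemma one_minus_exp_power_le:
  fixes B :: real
  assumes "0 \<le> B"
  shows "(1 - exp (- B)) ^ n \<le> exp (- (real n * exp (- B)))"
proof -
  have "(1 - exp (- B)) ^ n \<le> exp (- exp (- B)) ^ n"
    using assms exp_ge_add_one_self[of "- exp (- B)"] by (intro power_mono) auto
  then show ?thesis
    by (simp add: exp_of_nat_mult[symmetric])
qed

lemma power_five_mult_exp_exp_le:
  fixes g :: real
  assumes "16 * real d \<le> g" and "0 \<le> g"
  shows "5 ^ (d - 1) * exp (- exp (3 * g / 4)) \<le> exp (- exp (g / 2))"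
proof -
  have "(5::real) ^ (d - 1) \<le> exp 4 ^ (d - 1)"
    using exp_ge_add_one_self[of 4] by (intro power_mono) auto
  also have "\<dots> \<le> exp (4 * real d)"
    by (simp add: exp_of_nat_mult[symmetric] mult.commute)
  finally have five: "(5::real) ^ (d - 1) \<le> exp (4 * real d)" .
  have "exp (g / 2) * (1 + g / 4) \<le> exp (g / 2) * exp (g / 4)"
    by (intro mult_left_mono) auto
  also have "\<dots> = exp (3 * g / 4)"
    by (simp add: exp_add[symmetric])
  finally have "exp (g / 2) + 4 * real d \<le> exp (3 * g / 4)"
    using assms mult_right_mono[OF one_le_exp_iff[THEN iffD2], of "g / 2" "g / 4"]
    by (simp add: algebra_simps)
  have "5 ^ (d - 1) * exp (- exp (3 * g / 4)) \<le> exp (4 * real d) * exp (- exp (3 * g / 4))"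
    using five by (rule mult_right_mono) simp
  also have "\<dots> = exp (4 * real d - exp (3 * g / 4))"
    by (simp add: exp_diff exp_minus field_simps)
  also have "\<dots> \<le> exp (- exp (g / 2))"
    using \<open>exp (g / 2) + 4 * real d \<le> exp (3 * g / 4)\<close> by simp
  finally show ?thesis .
qed

lemma grid_bound_le_double_exp:
  fixes b :: real and n d :: nat
  assumes n: "3 \<le> n" and b: "0 \<le> b" and gap: "16 * real d \<le> ln n - b" and d: "1 \<le> d"
  defines "h \<equiv> (ln n - b) / (4 * real d)"
  shows "real ((nat \<lceil>b / h\<rceil> + 3) ^ (d - 1)) * (1 - exp (- (b + real d * h))) ^ n
           \<le> ln n ^ (d - 1) * exp (- exp ((ln n - b) / 2))"
proof -
  define g where "g = ln n - b"
  have L: "1 \<le> ln n"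
    using n exp_le by (subst ln_ge_iff) auto
  have h4: "4 \<le> h"
    using gap d unfolding h_def by (simp add: field_simps)
  have "real (nat \<lceil>b / h\<rceil> + 3) \<le> b / h + 4"
    using b h4 by simp linarith
  also have "\<dots> \<le> 5 * ln n"
  proof -
    have "b / h \<le> b"
      using b h4 by (simp add: divide_le_eq mult_le_cancel_left1)
    then show ?thesis
      using gap L by simp
  qed
  finally have count: "real ((nat \<lceil>b / h\<rceil> + 3) ^ (d - 1)) \<le> (5 * ln n) ^ (d - 1)"
    unfolding of_nat_power by (intro power_mono) auto
  have "real d * h = g / 4"
    using d unfolding h_def g_def by simp
  then have "real n * exp (- (b + real d * h)) = exp (ln n + - (b + g / 4))"
    using n by (simp add: exp_add)
  also have "\<dots> = exp (3 * g / 4)"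
    unfolding g_def by (simp add: field_simps)
  finally have tail: "(1 - exp (- (b + real d * h))) ^ n \<le> exp (- exp (3 * g / 4))"
    using one_minus_exp_power_le[of "b + real d * h" n] b h4 by simp
  have "0 \<le> b + real d * h"
    using b h4 by simp
  then have tail_nonneg: "0 \<le> (1 - exp (- (b + real d * h))) ^ n"
    by simp
  have "real ((nat \<lceil>b / h\<rceil> + 3) ^ (d - 1)) * (1 - exp (- (b + real d * h))) ^ n
      \<le> (5 * ln n) ^ (d - 1) * exp (- exp (3 * g / 4))"
    using L tail_nonneg by (intro mult_mono[OF count tail]) auto
  also have "\<dots> = ln n ^ (d - 1) * (5 ^ (d - 1) * exp (- exp (3 * g / 4)))"
    by (simp add: power_mult_distrib)
  also have "\<dots> \<le> ln n ^ (d - 1) * exp (- exp (g / 2))"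
    using power_five_mult_exp_exp_le[of d g] gap d L unfolding g_def by (intro mult_left_mono) auto
  finally show ?thesis
    unfolding g_def .
qed


section \<open>Independent exponential points\<close>

locale exponential_points = prob_space +
  fixes X :: "nat \<Rightarrow> 'a \<Rightarrow> real ^ 'd"
  assumes indep: "indep_vars (\<lambda>_. borel) (\<lambda>(i, j) \<omega>. X i \<omega> $ j) ({1..} \<times> UNIV)"
    and expo: "\<And>i j. i \<ge> 1 \<Longrightarrow> distributed M lborel (\<lambda>\<omega>. X i \<omega> $ j) (exponential_density 1)"
begin

lemma borel_measurable_coordinate: "i \<ge> 1 \<Longrightarrow> (\<lambda>\<omega>. X i \<omega> $ j) \<in> borel_measurable M"
  using distributed_measurable[OF expo] by simp

lemma sets_strictly_below:
  assumes "k \<ge> 1" shows "{\<omega> \<in> space M. strictly_below y (X k \<omega>)} \<in> events"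
  unfolding strictly_below_def using borel_measurable_coordinate[OF assms] by measurable

lemma prob_strictly_below:
  assumes k: "k \<ge> 1" and y: "y \<in> orthant"
  shows "prob {\<omega> \<in> space M. strictly_below y (X k \<omega>)} = exp (- (\<Sum>j\<in>UNIV. y $ j))"
proof -
  let ?Z = "(\<lambda>(i, j) \<omega>. X i \<omega> $ j) :: nat \<times> 'd \<Rightarrow> 'a \<Rightarrow> real"
  let ?A = "\<lambda>p. {y $ snd p <..}"
  have "{\<omega> \<in> space M. strictly_below y (X k \<omega>)} = (\<Inter>p\<in>Pair k ` UNIV. ?Z p -` ?A p \<inter> space M)"
    by (auto simp: strictly_below_def)
  also have "prob \<dots> = (\<Prod>p\<in>Pair k ` UNIV. prob (?Z p -` ?A p \<inter> space M))"
    using k by (intro indep_varsD[OF indep]) auto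
  also have "\<dots> = (\<Prod>j\<in>UNIV. prob {\<omega> \<in> space M. y $ j < X k \<omega> $ j})"
    by (subst prod.reindex) (auto simp: inj_on_def Int_def conj_commute)
  also have "\<dots> = (\<Prod>j\<in>UNIV. exp (- y $ j))"
    using y by (intro prod.cong refl)
      (simp add: exponential_distributedD_gt[OF expo[OF k]] orthant_def)
  also have "\<dots> = exp (- (\<Sum>j\<in>UNIV. y $ j))"
    by (simp add: exp_sum[symmetric] sum_negf)
  finally show ?thesis .
qed

lemma sets_RS_member: "{\<omega> \<in> space M. y \<in> RS (\<lambda>i. X i \<omega>) n} \<in> events"
proof -
  have "{\<omega> \<in> space M. y \<in> RS (\<lambda>i. X i \<omega>) n}
      = (if y \<in> orthant then space M - (\<Union>k\<in>{1..n}. {\<omega> \<in> space M. strictly_below y (X k \<omega>)}) else {})"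
    by (auto simp: RS_def)
  then show ?thesis using sets_strictly_below by auto
qed

lemma prob_RS_member:
  assumes y: "y \<in> orthant"
  shows "prob {\<omega> \<in> space M. y \<in> RS (\<lambda>i. X i \<omega>) n} = (1 - exp (- (\<Sum>j\<in>UNIV. y $ j))) ^ n"
proof (cases "n = 0")
  case True
  then show ?thesis using y by (simp add: RS_def prob_space)
next
  case False
  let ?Z = "(\<lambda>(i, j) \<omega>. X i \<omega> $ j) :: nat \<times> 'd \<Rightarrow> 'a \<Rightarrow> real"
  let ?row = "\<lambda>k \<omega>. restrict (\<lambda>p. ?Z p \<omega>) ({k} \<times> UNIV)"
  let ?A = "\<lambda>k. {f \<in> space (PiM ({k} \<times> UNIV) (\<lambda>_. borel :: real measure)). \<not> (\<forall>j. y $ j < f (k, j))}"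
  have rows: "indep_vars (\<lambda>k. PiM ({k} \<times> UNIV) (\<lambda>_. borel)) ?row {1..}"
    by (rule indep_vars_restrict[OF indep]) (auto simp: disjoint_family_on_def)
  have row_event: "?row k -` ?A k \<inter> space M = space M - {\<omega> \<in> space M. strictly_below y (X k \<omega>)}" for k
    by (auto simp: space_PiM strictly_below_def)
  have "{\<omega> \<in> space M. y \<in> RS (\<lambda>i. X i \<omega>) n} = (\<Inter>k\<in>{1..n}. ?row k -` ?A k \<inter> space M)"
    using False y unfolding row_event by (auto simp: RS_def)
  also have "prob \<dots> = (\<Prod>k\<in>{1..n}. prob (?row k -` ?A k \<inter> space M))"
    using False by (intro indep_varsD[OF rows]) auto
  also have "\<dots> = (\<Prod>k\<in>{1..n}. 1 - exp (- (\<Sum>j\<in>UNIV. y $ j)))"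
    by (intro prod.cong refl, unfold row_event) (simp add: prob_compl sets_strictly_below prob_strictly_below y)
  finally show ?thesis by simp
qed

lemma prob_Fminus_le:
  assumes n: "1 \<le> n" and h: "0 < h" and b: "0 \<le> b"
  shows "prob {\<omega> \<in> space M. Fminus (\<lambda>i. X i \<omega>) n \<le> b}
     \<le> real ((nat \<lceil>b / h\<rceil> + 3) ^ (CARD('d) - 1)) * (1 - exp (- (b + real CARD('d) * h))) ^ n"
proof -
  define B where "B = b + real CARD('d) * h"
  define K where "K = nat \<lceil>b / h\<rceil> + 2"
  define j0 :: 'd where "j0 = undefined"
  define G where "G m = {\<omega> \<in> space M. grid_point j0 h B m \<in> RS (\<lambda>i. X i \<omega>) n}" for m
  \<comment> \<open>off this null set \<open>0 \<notin> RS\<^sub>n\<close>, which makes the frontier nonempty\<close>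
  define N where "N = space M - {\<omega> \<in> space M. strictly_below 0 (X 1 \<omega>)}"
  have "{\<omega> \<in> space M. strictly_below 0 (X 1 \<omega>)} \<in> events"
    by (rule sets_strictly_below) simp
  then have N: "N \<in> events" "prob N = 0"
    using prob_strictly_below[of 1 0] by (simp_all add: N_def prob_compl orthant_def)
  have G: "G m \<in> events" for m
    unfolding G_def by (rule sets_RS_member)
  have "{\<omega> \<in> space M. Fminus (\<lambda>i. X i \<omega>) n \<le> b} \<subseteq> N \<union> (\<Union>m\<in>grid_indices j0 h B K. G m)"
  proof
    fix \<omega> assume \<omega>: "\<omega> \<in> {\<omega> \<in> space M. Fminus (\<lambda>i. X i \<omega>) n \<le> b}"
    show "\<omega> \<in> N \<union> (\<Union>m\<in>grid_indices j0 h B K. G m)"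
    proof (cases "\<omega> \<in> N")
      case False
      then have "strictly_below 0 (X 1 \<omega>)"
        using \<omega> by (simp add: N_def)
      then obtain x where "x \<in> RS (\<lambda>i. X i \<omega>) n" "(\<Sum>j\<in>UNIV. x $ j) < b + h"
        using exists_RS_point_sum_less[of 1 n "\<lambda>i. X i \<omega>" "b + h"] n h \<omega> by auto
      moreover from this obtain m where "m \<in> grid_indices j0 h B K" "\<forall>j. x $ j \<le> grid_point j0 h B m $ j"
        using exists_grid_point_above[OF h, of x b j0] unfolding B_def K_def by (auto simp: RS_def)
      ultimately show ?thesis
        using \<omega> RS_upward_closed unfolding G_def by blast
    qed simp
  qed
  then have "prob {\<omega> \<in> space M. Fminus (\<lambda>i. X i \<omega>) n \<le> b} \<le> prob N + prob (\<Union>m\<in>grid_indices j0 h B K. G m)"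
    using N G finite_grid_indices
    by (intro order_trans[OF finite_measure_mono measure_Un_le]) auto
  also have "\<dots> \<le> (\<Sum>m\<in>grid_indices j0 h B K. prob (G m))"
    using N G finite_grid_indices by (auto intro!: finite_measure_subadditive_finite)
  also have "\<dots> = real (card (grid_indices j0 h B K)) * (1 - exp (- B)) ^ n"
    using h by (simp add: G_def prob_RS_member grid_point_in_orthant sum_grid_point)
  also have "\<dots> \<le> real ((K + 1) ^ (CARD('d) - 1)) * (1 - exp (- B)) ^ n"
  proof (rule mult_right_mono)
    show "real (card (grid_indices j0 h B K)) \<le> real ((K + 1) ^ (CARD('d) - 1))"
      using card_grid_indices_le[of j0 h B K] by linarith
    have "0 \<le> B"
      using b h unfolding B_def by simp
    then show "0 \<le> (1 - exp (- B)) ^ n"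
      by simp
  qed
  finally show ?thesis
    unfolding B_def K_def by (simp add: add.commute)
qed

lemma prob_Fminus_le_double_exp:
  assumes n: "3 \<le> n" and b: "0 \<le> b" and gap: "16 * real CARD('d) \<le> ln n - b"
  shows "prob {\<omega> \<in> space M. Fminus (\<lambda>i. X i \<omega>) n \<le> b}
     \<le> ln n ^ (CARD('d) - 1) * exp (- exp ((ln n - b) / 2))"
proof -
  define h where "h = (ln n - b) / (4 * real CARD('d))"
  have d: "1 \<le> CARD('d)"
    using zero_less_card_finite[where 'a='d] by linarith
  then have "0 < h"
    using gap unfolding h_def by (intro divide_pos_pos) linarith+
  with n b have "prob {\<omega> \<in> space M. Fminus (\<lambda>i. X i \<omega>) n \<le> b}
      \<le> real ((nat \<lceil>b / h\<rceil> + 3) ^ (CARD('d) - 1)) * (1 - exp (- (b + real CARD('d) * h))) ^ n"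
    by (intro prob_Fminus_le) auto
  also have "\<dots> \<le> ln n ^ (CARD('d) - 1) * exp (- exp ((ln n - b) / 2))"
    unfolding h_def using n b gap d by (intro grid_bound_le_double_exp) auto
  finally show ?thesis .
qed

end

theorem proposition3p2:
  fixes M :: "'a measure"
    and X :: "nat \<Rightarrow> 'a \<Rightarrow> real ^ 'd"
    and b :: "nat \<Rightarrow> real"
  assumes "prob_space M"
    and indep: "prob_space.indep_vars M (\<lambda>_. borel) (\<lambda>(i, j) \<omega>. X i \<omega> $ j) ({1..} \<times> UNIV)"
    and expo: "\<And>i j. i \<ge> 1 \<Longrightarrow> distributed M lborel (\<lambda>\<omega>. X i \<omega> $ j) (exponential_density 1)"
    and b_bounds: "\<And>n. n \<ge> 2 \<Longrightarrow> 0 \<le> b n \<and> b n < ln (real n)"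
    and b_asymp: "(\<lambda>n. b n / ln (real n)) \<longlonglongrightarrow> 1"
    and b_gap: "filterlim (\<lambda>n. ln (real n) - b n) at_top sequentially"
  shows "\<exists>\<epsilon> :: nat \<Rightarrow> real. \<epsilon> \<longlonglongrightarrow> 0 \<and>
    (\<forall>\<^sub>F n in sequentially.
       measure M {\<omega> \<in> space M. Fminus (\<lambda>i. X i \<omega>) n \<le> b n}
         \<le> ln (real n) ^ (CARD('d) - 1)
            * exp (- exp ((1 + \<epsilon> n) * (1/2) * (ln (real n) - b n))))"
proof -
  interpret exponential_points M X
    using assms by (simp add: exponential_points_def exponential_points_axioms_def)
  \<comment> \<open>the bound holds with \<open>\<epsilon> = 0\<close>\<close>
  have "\<forall>\<^sub>F n in sequentially. 16 * real CARD('d) \<le> ln (real n) - b n \<and> 3 \<le> n"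
    using b_gap eventually_ge_at_top unfolding filterlim_at_top by (intro eventually_conj) auto
  then have "\<forall>\<^sub>F n in sequentially. prob {\<omega> \<in> space M. Fminus (\<lambda>i. X i \<omega>) n \<le> b n}
      \<le> ln (real n) ^ (CARD('d) - 1) * exp (- exp ((ln (real n) - b n) / 2))"
  proof eventually_elim
    case (elim n)
    then show ?case
      using b_bounds[of n] by (intro prob_Fminus_le_double_exp) auto
  qed
  then show ?thesis
    by (intro exI[of _ "\<lambda>_. 0"]) simp
qed

end
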